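(* Let $X$ be a (complete) doubling metric measure space and let $E\subset X$ be a closed set. Then $\overline{\operatorname{co\,dim}}_A(E)$ equals the infimum of all $q\ge0$ for which there exists $C>0$ such that \[\mathcal H^{\mu,q}_R\big(E\cap B(w,R)\big)\ge C\,R^{-q}\mu(B(w,R))\] for every $w\in E$ and all $0<R<\operatorname{diam}(E)$.
   Context: $(X,d,\mu)$ is a complete metric space with a Borel measure $\mu$ such that every closed ball $B(x,r)=\{y:d(x,y)\le r\}$, $r>0$, has $0<\mu(B(x,r))<\infty$, and $\mu$ is doubling. For $E\subset X$ and $r>0$, $E_r=\{x\in X:\operatorname{dist}(x,E)<r\}$. The upper Assouad codimension $\overline{\operatorname{co\,dim}}_A(E)$ is the infimum of all $s\ge0$ for which there is $c>0$ such that $\frac{\mu(E_r\cap B(x,R))}{\mu(B(x,R))}\ge c(r/R)^s$ for every $x\in E$ and all $0<r<R<\operatorname{diam}(E)$. For $q\ge0$ and $R>0$, the Hausdorff content of codimension $q$ is $\mathcal H_R^{\mu,q}(A)=\inf\{\sum_k\operatorname{rad}(B_k)^{-q}\mu(B_k): A\subset\bigcup_k B_k,\ \operatorname{rad}(B_k)\le R\}$, the infimum over countable covers by balls. *)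

theory Defs
  imports "HOL-Analysis.Analysis"
begin

definition doubling_mm :: "'a::metric_space measure \<Rightarrow> bool" where
  "doubling_mm M \<longleftrightarrow>
     sets M = sets borel \<and>
     (\<forall>x r. 0 < r \<longrightarrow> 0 < emeasure M (cball x r) \<and> emeasure M (cball x r) < \<infinity>) \<and>
     (\<exists>C::real. \<forall>x r. 0 < r \<longrightarrow>
        emeasure M (cball x (2 * r)) \<le> ennreal C * emeasure M (cball x r))"

definition ediam :: "'a::metric_space set \<Rightarrow> ereal" where
  "ediam E = (SUP p\<in>E \<times> E. ereal (dist (fst p) (snd p)))"

definition nbhd :: "'a::metric_space set \<Rightarrow> real \<Rightarrow> 'a set" where
  "nbhd E r = {x. infdist x E < r}"

definition upper_assouad_codim :: "'a::metric_space measure \<Rightarrow> 'a set \<Rightarrow> ereal" where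
  "upper_assouad_codim M E = Inf (ereal ` {s::real. 0 \<le> s \<and>
     (\<exists>c>0. \<forall>x\<in>E. \<forall>r R. 0 < r \<and> r < R \<and> ereal R < ediam E \<longrightarrow>
        measure M (nbhd E r \<inter> cball x R) / measure M (cball x R) \<ge> c * (r / R) powr s)})"

definition hcontent :: "'a::metric_space measure \<Rightarrow> real \<Rightarrow> real \<Rightarrow> 'a set \<Rightarrow> ennreal" where
  "hcontent M q R A = Inf {(\<Sum>k. if k \<in> I then ennreal (r k powr (-q)) * emeasure M (cball (c k) (r k)) else 0)
      | (I::nat set) (c::nat \<Rightarrow> 'a) (r::nat \<Rightarrow> real).
        A \<subseteq> (\<Union>k\<in>I. cball (c k) (r k)) \<and> (\<forall>k\<in>I. 0 < r k \<and> r k \<le> R)}"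

end

theory Submission
  imports Defs
begin

text \<open>If \<open>E\<close> satisfies the content bound with exponent \<open>q\<close>, a maximal \<open>r/4\<close>-separated net of
  \<open>E \<inter> B(x, R/2)\<close> is a competitor for the Hausdorff content, while the disjoint \<open>r/12\<close>-balls
  around its points lie in \<open>E\<^sub>r \<inter> B(x, R)\<close>; doubling compares the two and gives the Assouad
  bound with the same exponent. Conversely, assume the Assouad bound with exponent \<open>s\<close> and
  let \<open>q > s\<close>. By compactness only finite covers matter, and for them the content bound at
  scale \<open>\<rho>\<close> follows from the one at scale \<open>d = \<delta>\<rho>\<close>: the Assouad bound at scale \<open>d\<close> makes a
  separated net of \<open>E \<inter> B(y, \<rho>/2)\<close> at scale \<open>d\<close> carry a fixed fraction of the measure of
  \<open>B(y, \<rho>)\<close>; net points near a cover ball of radius \<open>> 2d\<close> are paid for by that ball, the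
  others by the bound at scale \<open>d\<close>, and since \<open>q > s\<close> a small \<open>\<delta>\<close> closes the induction.
  So every exponent above an admissible \<open>s\<close> is admissible for the content bound, and the two
  infima agree.\<close>

lemma Inf_ereal_eq_if_dense_above:
  fixes A B :: "real set"
  assumes "B \<subseteq> A" and dense: "\<And>s q. s \<in> A \<Longrightarrow> s < q \<Longrightarrow> q \<in> B"
  shows "Inf (ereal ` A) = Inf (ereal ` B)"
proof (rule antisym)
  show "Inf (ereal ` A) \<le> Inf (ereal ` B)"
    using assms(1) by (intro Inf_superset_mono) blast
  show "Inf (ereal ` B) \<le> Inf (ereal ` A)"
  proof (rule Inf_greatest)
    fix x assume "x \<in> ereal ` A"
    then obtain s where x: "x = ereal s" and s: "s \<in> A" by blast
    show "Inf (ereal ` B) \<le> x" unfolding x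
    proof (rule dense_ge)
      fix y assume "ereal s < y"
      then show "Inf (ereal ` B) \<le> y"
      proof (cases y)
        case (real q)
        with \<open>ereal s < y\<close> have "q \<in> B" using dense[OF s] by simp
        then show ?thesis unfolding real by (intro Inf_lower) blast
      qed simp_all
    qed
  qed
qed

lemma exists_small_powr_le:
  fixes A B s q \<epsilon> :: real
  assumes "0 < A" "0 < B" "s < q" "0 < \<epsilon>"
  shows "\<exists>\<delta>>0. \<delta> \<le> \<epsilon> \<and> A * \<delta> powr q \<le> B * \<delta> powr s"
proof -
  define \<delta> where "\<delta> = min \<epsilon> ((B / A) powr (1 / (q - s)))"
  have \<delta>: "0 < \<delta>" "\<delta> \<le> \<epsilon>" using assms by (auto simp: \<delta>_def)
  have "\<delta> powr (q - s) \<le> ((B / A) powr (1 / (q - s))) powr (q - s)"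
    using \<delta> assms by (intro powr_mono2) (auto simp: \<delta>_def)
  also have "\<dots> = B / A" using assms by (simp add: powr_powr)
  finally have "A * \<delta> powr (q - s) * \<delta> powr s \<le> B * \<delta> powr s"
    using assms by (intro mult_right_mono) (auto simp: field_simps)
  moreover have "\<delta> powr (q - s) * \<delta> powr s = \<delta> powr q" by (simp add: powr_add[symmetric])
  ultimately show ?thesis using \<delta> by (auto simp: mult.assoc)
qed

lemma sum_measure_disjoint_le:
  assumes "finite I" "\<And>i. i \<in> I \<Longrightarrow> A i \<in> sets M" "\<And>i. i \<in> I \<Longrightarrow> A i \<subseteq> T"
    and "T \<in> fmeasurable M" "disjoint_family_on A I"
  shows "(\<Sum>i\<in>I. measure M (A i)) \<le> measure M T"
proof -
  have fin: "A i \<in> fmeasurable M" if "i \<in> I" for i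
    using fmeasurableI2[OF assms(4) assms(3)[OF that] assms(2)[OF that]] .
  have "(\<Sum>i\<in>I. measure M (A i)) = measure M (\<Union>i\<in>I. A i)"
    using assms(1,2,5) fmeasurableD2[OF fin] by (intro measure_finite_Union[symmetric]) auto
  also have "\<dots> \<le> measure M T"
    using assms(1-4) by (intro measure_mono_fmeasurable sets.finite_UN) auto
  finally show ?thesis .
qed

definition separated :: "real \<Rightarrow> 'a::metric_space set \<Rightarrow> bool" where
  "separated e Y \<longleftrightarrow> (\<forall>y\<in>Y. \<forall>y'\<in>Y. y \<noteq> y' \<longrightarrow> e \<le> dist y y')"

lemma separated_disjoint_cballs:
  assumes "separated e Y" "2 * t < e"
  shows "disjoint_family_on (\<lambda>y. cball y t) Y"
  unfolding disjoint_family_on_def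
proof (intro ballI impI equals0I)
  fix y y' z assume y: "y \<in> Y" "y' \<in> Y" "y \<noteq> y'" and z: "z \<in> cball y t \<inter> cball y' t"
  have "dist y y' \<le> dist y z + dist z y'" by (rule dist_triangle)
  also have "\<dots> \<le> 2 * t" using z by (simp add: dist_commute)
  finally have "dist y y' \<le> 2 * t" .
  moreover have "e \<le> dist y y'" using assms(1) y unfolding separated_def by blast
  ultimately show False using assms(2) by linarith
qed

locale doubling_metric_measure =
  fixes M :: "'a::metric_space measure"
  assumes doubling_mm: "doubling_mm M"
begin

lemma sets_M_eq_borel: "sets M = sets borel"
  using doubling_mm unfolding doubling_mm_def by blast

lemma cball_sets [simp]: "cball x r \<in> sets M"
  by (simp add: sets_M_eq_borel)

lemma cball_fmeasurable [simp]: "cball x r \<in> fmeasurable M"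
proof -
  have "emeasure M (cball x r) \<le> emeasure M (cball x (max r 1))"
    by (intro emeasure_mono) (auto simp: sets_M_eq_borel)
  also have "\<dots> < \<infinity>" using doubling_mm unfolding doubling_mm_def by auto
  finally show ?thesis by (auto simp: fmeasurable_def sets_M_eq_borel)
qed

lemma emeasure_cball: "emeasure M (cball x r) = ennreal (measure M (cball x r))"
  by (simp add: emeasure_eq_measure2)

lemma measure_cball_pos: "0 < r \<Longrightarrow> 0 < measure M (cball x r)"
  using doubling_mm unfolding doubling_mm_def by (auto simp: emeasure_cball)

lemma measure_le_cball:
  "A \<in> sets borel \<Longrightarrow> A \<subseteq> cball x r \<Longrightarrow> measure M A \<le> measure M (cball x r)"
  by (rule measure_mono_fmeasurable) (auto simp: sets_M_eq_borel)

lemma exists_doubling_const: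
  "\<exists>D\<ge>1. \<forall>x r. 0 < r \<longrightarrow> measure M (cball x (2 * r)) \<le> D * measure M (cball x r)"
proof -
  obtain C :: real where C: "\<And>x r. 0 < r \<Longrightarrow>
      emeasure M (cball x (2 * r)) \<le> ennreal C * emeasure M (cball x r)"
    using doubling_mm unfolding doubling_mm_def by blast
  have "measure M (cball x (2 * r)) \<le> max 1 C * measure M (cball x r)" if "0 < r" for x r
  proof -
    have "ennreal (measure M (cball x (2 * r))) \<le> ennreal C * ennreal (measure M (cball x r))"
      using C[OF that] by (simp add: emeasure_cball)
    also have "\<dots> \<le> ennreal (max 1 C) * ennreal (measure M (cball x r))"
      by (intro mult_right_mono ennreal_leI) auto
    also have "\<dots> = ennreal (max 1 C * measure M (cball x r))"
      by (simp add: ennreal_mult)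
    finally show ?thesis by (simp add: ennreal_le_iff)
  qed
  then show ?thesis by (intro exI[of _ "max 1 C"]) auto
qed

definition C\<^sub>D :: real where
  "C\<^sub>D = (SOME D. 1 \<le> D \<and> (\<forall>x r. 0 < r \<longrightarrow> measure M (cball x (2 * r)) \<le> D * measure M (cball x r)))"

lemma doubling_const_ge_1: "1 \<le> C\<^sub>D"
  and measure_cball_double: "0 < r \<Longrightarrow> measure M (cball x (2 * r)) \<le> C\<^sub>D * measure M (cball x r)"
  using someI_ex[OF exists_doubling_const] unfolding C\<^sub>D_def by auto

lemma measure_cball_le_doubling_pow:
  assumes "0 < r" "cball y R \<subseteq> cball x (2 ^ n * r)"
  shows "measure M (cball y R) \<le> C\<^sub>D ^ n * measure M (cball x r)"
proof -
  have "measure M (cball x (2 ^ n * r)) \<le> C\<^sub>D ^ n * measure M (cball x r)"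
  proof (induction n)
    case (Suc n)
    have "measure M (cball x (2 ^ Suc n * r)) \<le> C\<^sub>D * measure M (cball x (2 ^ n * r))"
      using measure_cball_double[of "2 ^ n * r" x] assms(1) by (simp add: mult.assoc)
    also have "\<dots> \<le> C\<^sub>D ^ Suc n * measure M (cball x r)"
      using Suc doubling_const_ge_1 by (simp add: mult.assoc mult_left_mono)
    finally show ?case .
  qed simp
  with measure_le_cball[OF _ assms(2)] show ?thesis by simp
qed

lemma separated_card_bounded:
  fixes x :: 'a
  assumes "A \<subseteq> cball x R" "0 < e" "0 \<le> R"
  obtains N :: nat where "\<And>Y. finite Y \<Longrightarrow> Y \<subseteq> A \<Longrightarrow> separated e Y \<Longrightarrow> card Y \<le> N"
proof -
  define t where "t = e / 3"
  have t: "0 < t" using assms by (simp add: t_def)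
  obtain n where "(2 * R + e) / t < 2 ^ n" using real_arch_pow[of 2 "(2 * R + e) / t"] by auto
  then have n: "2 * R + e \<le> 2 ^ n * t" using t by (simp add: field_simps)
  define m where "m = measure M (cball x (R + e))"
  have m: "0 < m" unfolding m_def using assms by (intro measure_cball_pos) auto
  have "card Y \<le> nat \<lceil>C\<^sub>D ^ n\<rceil>" if Y: "finite Y" "Y \<subseteq> A" "separated e Y" for Y
  proof -
    have near: "dist x y \<le> R" if "y \<in> Y" for y using that Y assms by auto
    have outer: "cball x (R + e) \<subseteq> cball y (2 ^ n * t)" if "y \<in> Y" for y
    proof
      fix z assume "z \<in> cball x (R + e)"
      then show "z \<in> cball y (2 ^ n * t)"
        using dist_triangle[of y z x] near[OF that] n by (simp add: dist_commute)
    qed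
    have inner: "cball y t \<subseteq> cball x (R + e)" if "y \<in> Y" for y
    proof
      fix z assume "z \<in> cball y t"
      then show "z \<in> cball x (R + e)"
        using dist_triangle[of x z y] near[OF that] assms(2) by (simp add: t_def)
    qed
    have "m \<le> C\<^sub>D ^ n * measure M (cball y t)" if "y \<in> Y" for y
      unfolding m_def using t outer[OF that] by (intro measure_cball_le_doubling_pow)
    then have "card Y * m \<le> C\<^sub>D ^ n * (\<Sum>y\<in>Y. measure M (cball y t))"
      by (subst sum_distrib_left) (metis sum_bounded_below)
    moreover have "(\<Sum>y\<in>Y. measure M (cball y t)) \<le> m"
      unfolding m_def using Y(1) inner separated_disjoint_cballs[OF Y(3), of t] t
      by (intro sum_measure_disjoint_le) (auto simp: t_def)
    ultimately have "card Y * m \<le> C\<^sub>D ^ n * m"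
      using doubling_const_ge_1 by (smt (verit) mult_left_mono zero_le_power)
    then have "real (card Y) \<le> C\<^sub>D ^ n" using m by simp
    then show ?thesis by linarith
  qed
  then show ?thesis using that by blast
qed

lemma exists_separated_net:
  fixes x :: 'a
  assumes "A \<subseteq> cball x R" "0 < e" "0 \<le> R"
  obtains Y where "finite Y" "Y \<subseteq> A" "separated e Y" "\<forall>a\<in>A. \<exists>y\<in>Y. dist a y < e"
proof -
  obtain N where N: "\<And>Y. finite Y \<Longrightarrow> Y \<subseteq> A \<Longrightarrow> separated e Y \<Longrightarrow> card Y \<le> N"
    using separated_card_bounded[OF assms] by blast
  define S where "S = {card Y | Y. finite Y \<and> Y \<subseteq> A \<and> separated e Y}"
  have "finite S" using N by (intro finite_subset[of S "{..N}"]) (auto simp: S_def)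
  moreover have "0 \<in> S" unfolding S_def separated_def by (intro CollectI exI[of _ "{}"]) simp
  ultimately have "Max S \<in> S" by (intro Max_in) auto
  \<comment> \<open>a separated subset of maximal cardinality cannot be extended, so it is an \<open>e\<close>-net\<close>
  then obtain Y where Y: "finite Y" "Y \<subseteq> A" "separated e Y" "card Y = Max S"
    unfolding S_def by auto
  have "\<exists>y\<in>Y. dist a y < e" if a: "a \<in> A" for a
  proof (rule ccontr)
    assume "\<not> ?thesis"
    then have far: "\<forall>y\<in>Y. e \<le> dist a y" by auto
    then have "a \<notin> Y" using assms(2) by force
    have "separated e (insert a Y)" using Y(3) far unfolding separated_def by (auto simp: dist_commute)
    then have "card (insert a Y) \<le> Max S" using Y a \<open>finite S\<close> unfolding S_def by (intro Max_ge) auto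
    with Y \<open>a \<notin> Y\<close> show False by simp
  qed
  with Y that show ?thesis by blast
qed

lemma nbhd_sets [simp]: "nbhd E r \<in> sets M"
proof -
  have "open (nbhd E r)" unfolding nbhd_def
    by (intro open_Collect_less continuous_on_infdist continuous_on_const) simp
  then show ?thesis by (simp add: sets_M_eq_borel)
qed

lemma nbhd_Int_cball_fmeasurable [simp]: "nbhd E r \<inter> cball x R \<in> fmeasurable M"
  by (subst Int_commute) (simp add: fmeasurable_Int_fmeasurable)

lemma hcontent_le_finite_cover:
  assumes "finite Y" "0 < \<rho>" "\<rho> \<le> R" "A \<subseteq> (\<Union>y\<in>Y. cball y \<rho>)"
  shows "hcontent M q R A \<le> ennreal (\<Sum>y\<in>Y. \<rho> powr (-q) * measure M (cball y \<rho>))"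
proof -
  obtain h where h: "bij_betw h {..<card Y} Y"
    using ex_bij_betw_nat_finite[OF assms(1)] by (auto simp: atLeast0LessThan)
  define f where "f k = (if k \<in> {..<card Y} then ennreal (\<rho> powr (-q)) * emeasure M (cball (h k) \<rho>) else 0)" for k
  have "A \<subseteq> (\<Union>k<card Y. cball (h k) \<rho>)"
  proof
    fix a assume "a \<in> A"
    then obtain y where "y \<in> Y" "a \<in> cball y \<rho>" using assms(4) by blast
    moreover obtain k where "k < card Y" "h k = y"
      using bij_betw_imp_surj_on[OF h] \<open>y \<in> Y\<close> by (metis imageE lessThan_iff)
    ultimately show "a \<in> (\<Union>k<card Y. cball (h k) \<rho>)" by blast
  qed
  then have "hcontent M q R A \<le> suminf f"
    unfolding hcontent_def f_def using assms(2,3)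
    by (intro Inf_lower CollectI exI[of _ "{..<card Y}"] exI[of _ h] exI[of _ "\<lambda>_. \<rho>"]) auto
  also have "suminf f = (\<Sum>k<card Y. f k)" by (rule suminf_finite) (auto simp: f_def)
  also have "\<dots> = (\<Sum>k<card Y. ennreal (\<rho> powr (-q) * measure M (cball (h k) \<rho>)))"
    by (simp add: f_def emeasure_cball ennreal_mult)
  also have "\<dots> = ennreal (\<Sum>k<card Y. \<rho> powr (-q) * measure M (cball (h k) \<rho>))"
    by (rule sum_ennreal) simp
  also have "(\<Sum>k<card Y. \<rho> powr (-q) * measure M (cball (h k) \<rho>)) = (\<Sum>y\<in>Y. \<rho> powr (-q) * measure M (cball y \<rho>))"
    by (rule sum.reindex_bij_betw[OF h])
  finally show ?thesis .
qed

definition assouad_bound :: "'a set \<Rightarrow> real \<Rightarrow> real \<Rightarrow> bool" where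
  "assouad_bound E s c \<longleftrightarrow> (\<forall>x\<in>E. \<forall>r R. 0 < r \<and> r < R \<and> ereal R < ediam E \<longrightarrow>
     c * (r / R) powr s * measure M (cball x R) \<le> measure M (nbhd E r \<inter> cball x R))"

definition content_bound :: "'a set \<Rightarrow> real \<Rightarrow> real \<Rightarrow> bool" where
  "content_bound E q C \<longleftrightarrow> (\<forall>w\<in>E. \<forall>R. 0 < R \<and> ereal R < ediam E \<longrightarrow>
     ennreal (C * R powr (-q) * measure M (cball w R)) \<le> hcontent M q R (E \<inter> cball w R))"

lemma assouad_bound_iff:
  "assouad_bound E s c \<longleftrightarrow> (\<forall>x\<in>E. \<forall>r R. 0 < r \<and> r < R \<and> ereal R < ediam E \<longrightarrow>
     c * (r / R) powr s \<le> measure M (nbhd E r \<inter> cball x R) / measure M (cball x R))"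
  unfolding assouad_bound_def
  by (auto simp: pos_le_divide_eq measure_cball_pos)

lemma upper_assouad_codim_eq:
  "upper_assouad_codim M E = Inf (ereal ` {s. 0 \<le> s \<and> (\<exists>c>0. assouad_bound E s c)})"
  unfolding upper_assouad_codim_def assouad_bound_iff ..

lemma hcontent_le_measure_nbhd:
  assumes "0 < r" "r \<le> 4 * R"
  shows "hcontent M q R (E \<inter> cball x R)
    \<le> ennreal ((r / 4) powr (-q) * C\<^sub>D^2 * measure M (nbhd E r \<inter> cball x (2 * R)))"
proof -
  define \<rho> where "\<rho> = r / 4"
  have \<rho>: "0 < \<rho>" "\<rho> \<le> R" using assms by (auto simp: \<rho>_def)
  obtain Y where Y: "finite Y" "Y \<subseteq> E \<inter> cball x R" "separated \<rho> Y"
    and net: "\<forall>a\<in>E \<inter> cball x R. \<exists>y\<in>Y. dist a y < \<rho>"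
    using exists_separated_net[of "E \<inter> cball x R" x R \<rho>] \<rho> by auto
  have "E \<inter> cball x R \<subseteq> (\<Union>y\<in>Y. cball y \<rho>)" using net by (force simp: dist_commute)
  with Y(1) \<rho> have content: "hcontent M q R (E \<inter> cball x R)
      \<le> ennreal (\<Sum>y\<in>Y. \<rho> powr (-q) * measure M (cball y \<rho>))"
    by (rule hcontent_le_finite_cover)
  have inside: "cball y (\<rho> / 3) \<subseteq> nbhd E r \<inter> cball x (2 * R)" if "y \<in> Y" for y
  proof
    fix z assume z: "z \<in> cball y (\<rho> / 3)"
    have "infdist z E \<le> dist z y" using that Y(2) by (intro infdist_le) auto
    moreover have "dist x z \<le> dist x y + dist y z" by (rule dist_triangle)
    ultimately show "z \<in> nbhd E r \<inter> cball x (2 * R)"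
      using z that Y(2) \<rho> by (auto simp: nbhd_def \<rho>_def dist_commute)
  qed
  have "(\<Sum>y\<in>Y. \<rho> powr (-q) * measure M (cball y \<rho>))
      \<le> (\<Sum>y\<in>Y. \<rho> powr (-q) * (C\<^sub>D^2 * measure M (cball y (\<rho> / 3))))"
    using \<rho> by (intro sum_mono mult_left_mono measure_cball_le_doubling_pow subset_cball) auto
  also have "\<dots> = \<rho> powr (-q) * C\<^sub>D^2 * (\<Sum>y\<in>Y. measure M (cball y (\<rho> / 3)))"
    by (simp add: sum_distrib_left mult.assoc)
  also have "\<dots> \<le> \<rho> powr (-q) * C\<^sub>D^2 * measure M (nbhd E r \<inter> cball x (2 * R))"
    using Y(1) inside separated_disjoint_cballs[OF Y(3), of "\<rho> / 3"] \<rho>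
    by (intro mult_left_mono sum_measure_disjoint_le) auto
  finally have "(\<Sum>y\<in>Y. \<rho> powr (-q) * measure M (cball y \<rho>))
      \<le> \<rho> powr (-q) * C\<^sub>D^2 * measure M (nbhd E r \<inter> cball x (2 * R))" .
  with content have "hcontent M q R (E \<inter> cball x R)
      \<le> ennreal (\<rho> powr (-q) * C\<^sub>D^2 * measure M (nbhd E r \<inter> cball x (2 * R)))"
    by (rule order.trans[OF _ ennreal_leI])
  then show ?thesis unfolding \<rho>_def .
qed

lemma assouad_bound_if_content_bound:
  assumes "content_bound E q C" "0 < C"
  shows "assouad_bound E q (C / (C\<^sub>D^3 * 2 powr q))"
  unfolding assouad_bound_def
proof (intro ballI allI impI)
  fix x r R assume x: "x \<in> E" and rR: "0 < r \<and> r < R \<and> ereal R < ediam E"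
  define T where "T = measure M (nbhd E r \<inter> cball x R)"
  define m where "m = measure M (cball x (R / 2))"
  have "ereal (R / 2) < ediam E" by (rule order.strict_trans1[of _ "ereal R"]) (use rR in auto)
  then have "ennreal (C * (R / 2) powr (-q) * m) \<le> hcontent M q (R / 2) (E \<inter> cball x (R / 2))"
    using assms(1) x rR unfolding content_bound_def m_def by simp
  also have "\<dots> \<le> ennreal ((r / 4) powr (-q) * C\<^sub>D^2 * T)"
    using hcontent_le_measure_nbhd[of r "R / 2" q E x] rR by (simp add: T_def)
  finally have "C * (R / 2) powr (-q) * m \<le> (r / 4) powr (-q) * C\<^sub>D^2 * T"
    by (subst (asm) ennreal_le_iff) (auto simp: T_def)
  moreover have "(R / 2) powr (-q) = (r / 4) powr (-q) * ((r / R) powr q / 2 powr q)"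
  proof -
    have "(4::real) powr q = 2 powr q * 2 powr q" using powr_mult[of 2 2 q] by simp
    with rR show ?thesis by (simp add: powr_minus_divide powr_divide)
  qed
  ultimately have "(r / 4) powr (-q) * (C * (r / R) powr q / 2 powr q * m) \<le> (r / 4) powr (-q) * (C\<^sub>D^2 * T)"
    by (simp add: mult_ac)
  then have half: "C * (r / R) powr q / 2 powr q * m \<le> C\<^sub>D^2 * T"
    by (rule mult_left_le_imp_le) (use rR in simp)
  have "C / (C\<^sub>D^3 * 2 powr q) * (r / R) powr q * measure M (cball x R)
      \<le> C / (C\<^sub>D^3 * 2 powr q) * (r / R) powr q * (C\<^sub>D * m)"
    unfolding m_def using measure_cball_double[of "R / 2" x] rR assms(2) doubling_const_ge_1
    by (intro mult_left_mono) auto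
  also have "\<dots> = C * (r / R) powr q / 2 powr q * m / C\<^sub>D^2"
    using doubling_const_ge_1 by (simp add: field_simps eval_nat_numeral)
  also have "\<dots> \<le> C\<^sub>D^2 * T / C\<^sub>D^2"
    using half by (intro divide_right_mono) auto
  also have "\<dots> = T"
    using doubling_const_ge_1 by simp
  finally show "C / (C\<^sub>D^3 * 2 powr q) * (r / R) powr q * measure M (cball x R)
      \<le> measure M (nbhd E r \<inter> cball x R)" unfolding T_def .
qed

definition cover_sum :: "real \<Rightarrow> nat set \<Rightarrow> (nat \<Rightarrow> 'a) \<Rightarrow> (nat \<Rightarrow> real) \<Rightarrow> real" where
  "cover_sum q F cen rad = (\<Sum>k\<in>F. rad k powr (-q) * measure M (cball (cen k) (rad k)))"

text \<open>The lower cut-off \<open>rmin\<close> of the radii is what makes the induction over the scales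
  \<open>\<rho>, \<delta>\<rho>, \<delta>\<^sup>2\<rho>, \<dots>\<close> terminate: below it the statement is vacuous.\<close>
definition covering_bound :: "real \<Rightarrow> 'a set \<Rightarrow> real \<Rightarrow> real \<Rightarrow> real \<Rightarrow> bool" where
  "covering_bound q E C rmin \<rho> \<longleftrightarrow> (\<forall>y\<in>E. \<forall>F cen rad. finite F \<longrightarrow>
     (\<forall>k\<in>F. rmin \<le> rad k \<and> rad k \<le> 2 * \<rho>) \<longrightarrow> E \<inter> cball y \<rho> \<subseteq> (\<Union>k\<in>F. cball (cen k) (rad k)) \<longrightarrow>
     C * \<rho> powr (-q) * measure M (cball y \<rho>) \<le> cover_sum q F cen rad)"

lemma cover_sum_mono: "finite F \<Longrightarrow> G \<subseteq> F \<Longrightarrow> cover_sum q G cen rad \<le> cover_sum q F cen rad"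
  unfolding cover_sum_def by (intro sum_mono2) auto

lemma measure_nbhd_le_net_sum:
  assumes "E \<noteq> {}" "finite Y" "\<forall>a\<in>E \<inter> cball y (2 * R). \<exists>z\<in>Y. dist a z < e" "d \<le> R"
  shows "measure M (nbhd E d \<inter> cball y R) \<le> (\<Sum>z\<in>Y. measure M (cball z (e + d)))"
proof -
  have "nbhd E d \<inter> cball y R \<subseteq> (\<Union>z\<in>Y. cball z (e + d))"
  proof
    fix p assume p: "p \<in> nbhd E d \<inter> cball y R"
    then obtain a where a: "a \<in> E" "dist p a < d"
      using assms(1) by (auto simp: nbhd_def infdist_notempty cINF_less_iff)
    have "dist y a \<le> dist y p + dist p a" by (rule dist_triangle)
    with p a assms(4) obtain z where z: "z \<in> Y" "dist a z < e" using assms(3) by fastforce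
    have "dist z p \<le> e + d" using dist_triangle[of z p a] z a by (simp add: dist_commute)
    with z show "p \<in> (\<Union>z\<in>Y. cball z (e + d))" by auto
  qed
  then have "measure M (nbhd E d \<inter> cball y R) \<le> measure M (\<Union>z\<in>Y. cball z (e + d))"
    using assms(2) by (intro measure_mono_fmeasurable fmeasurable.finite_UN) auto
  also have "\<dots> \<le> (\<Sum>z\<in>Y. measure M (cball z (e + d)))"
    using assms(2) by (intro measure_UNION_le) auto
  finally show ?thesis .
qed

text \<open>Net points whose \<open>d\<close>-balls meet only cover balls of radius at most \<open>2d\<close>: by induction at
  scale \<open>d\<close> each of them is charged to its own part of the cover, and separation makes these
  parts disjoint.\<close>
lemma sum_measure_le_cover_sum_small_balls:
  assumes IH: "covering_bound q E C rmin d" and "0 < d" "0 < C"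
    and Y: "finite Y" "Y \<subseteq> E" "separated e Y" "6 * d < e"
    and F: "finite F" "\<forall>k\<in>F. rmin \<le> rad k"
    and cov: "\<And>z. z \<in> Y \<Longrightarrow> E \<inter> cball z d \<subseteq> (\<Union>k\<in>F. cball (cen k) (rad k))"
    and small: "\<And>z k. z \<in> Y \<Longrightarrow> k \<in> F \<Longrightarrow> cball (cen k) (rad k) \<inter> E \<inter> cball z d \<noteq> {} \<Longrightarrow> rad k \<le> 2 * d"
  shows "(\<Sum>z\<in>Y. measure M (cball z d)) \<le> cover_sum q F cen rad * d powr q / C"
proof -
  define G where "G z = {k\<in>F. cball (cen k) (rad k) \<inter> E \<inter> cball z d \<noteq> {}}" for z
  have G: "finite (G z)" "G z \<subseteq> F" for z using F(1) by (auto simp: G_def)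
  have "C * d powr (-q) * measure M (cball z d) \<le> cover_sum q (G z) cen rad" if "z \<in> Y" for z
  proof -
    have "E \<inter> cball z d \<subseteq> (\<Union>k\<in>G z. cball (cen k) (rad k))"
      using cov[OF that] by (fastforce simp: G_def)
    moreover have "\<forall>k\<in>G z. rmin \<le> rad k \<and> rad k \<le> 2 * d"
      using F(2) small[OF that] by (auto simp: G_def)
    ultimately show ?thesis using IH that Y(2) G(1) unfolding covering_bound_def by blast
  qed
  then have each: "measure M (cball z d) \<le> cover_sum q (G z) cen rad * d powr q / C" if "z \<in> Y" for z
    using that \<open>0 < d\<close> \<open>0 < C\<close> by (simp add: powr_minus field_simps)
  have "disjoint_family_on G Y"
    unfolding disjoint_family_on_def
  proof (intro ballI impI equals0I)
    fix z z' k assume zz: "z \<in> Y" "z' \<in> Y" "z \<noteq> z'" and k: "k \<in> G z \<inter> G z'"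
    then obtain p p' where p: "dist (cen k) p \<le> rad k" "dist z p \<le> d"
      and p': "dist (cen k) p' \<le> rad k" "dist z' p' \<le> d" by (auto simp: G_def)
    have "rad k \<le> 2 * d" using small zz k by (auto simp: G_def)
    moreover have "dist z z' \<le> dist z p + dist p (cen k) + dist (cen k) p' + dist p' z'"
      using dist_triangle[of z z' p] dist_triangle[of p z' "cen k"] dist_triangle[of "cen k" z' p']
      by linarith
    ultimately have "dist z z' \<le> 6 * d" using p p' by (simp add: dist_commute)
    moreover have "e \<le> dist z z'" using Y(3) zz unfolding separated_def by blast
    ultimately show False using Y(4) by linarith
  qed
  then have "(\<Sum>z\<in>Y. cover_sum q (G z) cen rad) = cover_sum q (\<Union>z\<in>Y. G z) cen rad"
    unfolding cover_sum_def using Y(1) G(1) by (intro sum.UNION_disjoint_family[symmetric]) auto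
  also have "\<dots> \<le> cover_sum q F cen rad"
    using F(1) G(2) by (intro cover_sum_mono) auto
  finally have parts: "(\<Sum>z\<in>Y. cover_sum q (G z) cen rad) \<le> cover_sum q F cen rad" .
  have "(\<Sum>z\<in>Y. measure M (cball z d)) \<le> (\<Sum>z\<in>Y. cover_sum q (G z) cen rad * d powr q / C)"
    by (rule sum_mono) (rule each)
  also have "\<dots> = (\<Sum>z\<in>Y. cover_sum q (G z) cen rad) * d powr q / C"
    by (simp add: sum_divide_distrib sum_distrib_right)
  also have "\<dots> \<le> cover_sum q F cen rad * d powr q / C"
    using parts \<open>0 < C\<close> by (intro divide_right_mono mult_right_mono) auto
  finally show ?thesis .
qed

lemma sum_measure_le_cover_sum_large_balls:
  assumes "0 \<le> q" and Y: "finite Y" "separated e Y" "2 * d < e"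
    and F: "finite F" "\<forall>k\<in>F. 0 < rad k \<and> rad k \<le> 2 * \<rho>"
    and large: "\<And>z. z \<in> Y \<Longrightarrow> \<exists>k\<in>F. 2 * d < rad k \<and> cball (cen k) (rad k) \<inter> cball z d \<noteq> {}"
  shows "(\<Sum>z\<in>Y. measure M (cball z d)) \<le> C\<^sub>D * (2 * \<rho>) powr q * cover_sum q F cen rad"
proof -
  have "(\<Union>z\<in>Y. cball z d) \<subseteq> (\<Union>k\<in>F. cball (cen k) (2 * rad k))"
  proof
    fix u assume "u \<in> (\<Union>z\<in>Y. cball z d)"
    then obtain z where z: "z \<in> Y" "dist z u \<le> d" by auto
    then obtain k p where k: "k \<in> F" "2 * d < rad k" and p: "dist (cen k) p \<le> rad k" "dist z p \<le> d"
      using large by fastforce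
    have "dist (cen k) u \<le> dist (cen k) p + dist p z + dist z u"
      using dist_triangle[of "cen k" u p] dist_triangle[of p u z] by linarith
    with k p z show "u \<in> (\<Union>k\<in>F. cball (cen k) (2 * rad k))" by (force simp: dist_commute)
  qed
  then have "(\<Sum>z\<in>Y. measure M (cball z d)) \<le> measure M (\<Union>k\<in>F. cball (cen k) (2 * rad k))"
    using Y separated_disjoint_cballs[OF Y(2), of d] F(1)
    by (intro sum_measure_disjoint_le fmeasurable.finite_UN) auto
  also have "\<dots> \<le> (\<Sum>k\<in>F. measure M (cball (cen k) (2 * rad k)))"
    using F(1) by (intro measure_UNION_le) auto
  also have "\<dots> \<le> (\<Sum>k\<in>F. C\<^sub>D * (2 * \<rho>) powr q * (rad k powr (-q) * measure M (cball (cen k) (rad k))))"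
  proof (rule sum_mono)
    fix k assume "k \<in> F"
    then have rk: "0 < rad k" "rad k \<le> 2 * \<rho>" using F(2) by auto
    have "1 \<le> (2 * \<rho>) powr q * rad k powr (-q)"
      using powr_mono2[OF \<open>0 \<le> q\<close> _ rk(2)] rk by (simp add: powr_minus field_simps)
    from mult_right_mono[OF this measure_nonneg]
    have "measure M (cball (cen k) (rad k))
        \<le> (2 * \<rho>) powr q * (rad k powr (-q) * measure M (cball (cen k) (rad k)))"
      by (simp add: mult.assoc)
    then have "C\<^sub>D * measure M (cball (cen k) (rad k))
        \<le> C\<^sub>D * ((2 * \<rho>) powr q * (rad k powr (-q) * measure M (cball (cen k) (rad k))))"
      using doubling_const_ge_1 by (intro mult_left_mono) auto
    with measure_cball_double[OF rk(1), of "cen k"]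
    show "measure M (cball (cen k) (2 * rad k))
        \<le> C\<^sub>D * (2 * \<rho>) powr q * (rad k powr (-q) * measure M (cball (cen k) (rad k)))"
      by (simp add: mult.assoc)
  qed
  also have "\<dots> = C\<^sub>D * (2 * \<rho>) powr q * cover_sum q F cen rad"
    by (simp add: cover_sum_def sum_distrib_left)
  finally show ?thesis .
qed

lemma measure_cball_le_net_sum:
  assumes "assouad_bound E s c" "0 < c" "y \<in> E" "0 < \<delta>" "\<delta> \<le> 1/8" "0 < \<rho>" "ereal \<rho> < ediam E"
    and "finite Y" "\<forall>a\<in>E \<inter> cball y (\<rho> / 2). \<exists>z\<in>Y. dist a z < 11 * (\<delta> * \<rho>)"
  shows "c * (4 * \<delta>) powr s / C\<^sub>D^2 * measure M (cball y \<rho>)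
    \<le> C\<^sub>D^4 * (\<Sum>z\<in>Y. measure M (cball z (\<delta> * \<rho>)))"
proof -
  define d where "d = \<delta> * \<rho>"
  have d: "0 < d" "d < \<rho> / 4" using assms(4-6) by (auto simp: d_def)
  have "ereal (\<rho> / 4) < ediam E" by (rule order.strict_trans1[OF _ assms(7)]) (use assms(6) in simp)
  have "c * (4 * \<delta>) powr s / C\<^sub>D^2 * measure M (cball y \<rho>)
      \<le> c * (4 * \<delta>) powr s / C\<^sub>D^2 * (C\<^sub>D^2 * measure M (cball y (\<rho> / 4)))"
    using measure_cball_le_doubling_pow[of "\<rho> / 4" y \<rho> y 2] assms(2,6) doubling_const_ge_1
    by (intro mult_left_mono) auto
  also have "\<dots> = c * (d / (\<rho> / 4)) powr s * measure M (cball y (\<rho> / 4))"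
    using doubling_const_ge_1 assms(6) by (simp add: d_def mult.commute)
  also have "\<dots> \<le> measure M (nbhd E d \<inter> cball y (\<rho> / 4))"
    using assms(1,3) d \<open>ereal (\<rho> / 4) < ediam E\<close> unfolding assouad_bound_def by blast
  also have "\<dots> \<le> (\<Sum>z\<in>Y. measure M (cball z (11 * d + d)))"
    using assms(3,5,8,9) d by (intro measure_nbhd_le_net_sum) (auto simp: d_def)
  also have "\<dots> \<le> (\<Sum>z\<in>Y. C\<^sub>D^4 * measure M (cball z d))"
    using d by (intro sum_mono measure_cball_le_doubling_pow subset_cball) auto
  finally show ?thesis by (simp add: d_def sum_distrib_left)
qed

context
  fixes E :: "'a set" and s c q \<delta> K C :: real
  assumes assouad: "assouad_bound E s c" and c: "0 < c" and q: "0 \<le> q"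
    and \<delta>: "0 < \<delta>" "\<delta> \<le> 1/8" and K: "K = c * (4 * \<delta>) powr s / C\<^sub>D^2"
    and small_\<delta>: "C\<^sub>D^4 * \<delta> powr q \<le> K / 2" and C: "C = K / (2 * C\<^sub>D^5 * 2 powr q)"
begin

lemma K_pos: "0 < K" and C_pos: "0 < C"
  using c \<delta> doubling_const_ge_1 by (simp_all add: K C)

lemma covering_bound_step_estimate:
  assumes "0 < \<rho>" "0 \<le> S" and lower: "K * m \<le> C\<^sub>D^4 * (X + Z)"
    and "X \<le> S * (\<delta> * \<rho>) powr q / C" and "Z \<le> C\<^sub>D * (2 * \<rho>) powr q * S"
  shows "C * \<rho> powr (-q) * m \<le> S"
proof -
  have D: "1 \<le> C\<^sub>D" by (rule doubling_const_ge_1)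
  \<comment> \<open>this is where the choice of \<open>\<delta>\<close> enters\<close>
  have "C\<^sub>D^4 * (S * (\<delta> * \<rho>) powr q / C) = (C\<^sub>D^4 * \<delta> powr q) * (2 * C\<^sub>D^5 * (2 * \<rho>) powr q * S / K)"
    using K_pos D assms(1) \<delta> by (simp add: C powr_mult field_simps)
  also have "\<dots> \<le> K / 2 * (2 * C\<^sub>D^5 * (2 * \<rho>) powr q * S / K)"
    using small_\<delta> K_pos D assms(2) by (intro mult_right_mono) auto
  finally have "C\<^sub>D^4 * (S * (\<delta> * \<rho>) powr q / C) \<le> C\<^sub>D^5 * (2 * \<rho>) powr q * S"
    using K_pos by simp
  moreover have "C\<^sub>D^4 * X \<le> C\<^sub>D^4 * (S * (\<delta> * \<rho>) powr q / C)"
    using assms(4) by (intro mult_left_mono) auto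
  moreover have "C\<^sub>D^4 * Z \<le> C\<^sub>D^5 * (2 * \<rho>) powr q * S"
    using mult_left_mono[OF assms(5), of "C\<^sub>D^4"] D by (simp add: eval_nat_numeral mult_ac)
  ultimately have "K * m \<le> 2 * C\<^sub>D^5 * (2 * \<rho>) powr q * S"
    using lower by (simp add: distrib_left)
  then show ?thesis
    using assms(1) D by (simp add: C powr_minus powr_mult field_simps)
qed

lemma covering_bound_step:
  assumes "0 < rmin" "0 < \<rho>" "ereal \<rho> < ediam E" and IH: "covering_bound q E C rmin (\<delta> * \<rho>)"
  shows "covering_bound q E C rmin \<rho>"
  unfolding covering_bound_def
proof (intro ballI allI impI)
  fix y and F :: "nat set" and cen rad
  assume y: "y \<in> E" and F: "finite F" and rads: "\<forall>k\<in>F. rmin \<le> rad k \<and> rad k \<le> 2 * \<rho>"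
    and cov: "E \<inter> cball y \<rho> \<subseteq> (\<Union>k\<in>F. cball (cen k) (rad k))"
  define d where "d = \<delta> * \<rho>"
  define S where "S = cover_sum q F cen rad"
  have d: "0 < d" "d \<le> \<rho> / 8" using \<delta> \<open>0 < \<rho>\<close> by (auto simp: d_def)
  obtain Y where Y: "finite Y" "Y \<subseteq> E \<inter> cball y (\<rho> / 2)" "separated (11 * d) Y"
    and net: "\<forall>a\<in>E \<inter> cball y (\<rho> / 2). \<exists>z\<in>Y. dist a z < 11 * d"
    using exists_separated_net[of "E \<inter> cball y (\<rho> / 2)" y "\<rho> / 2" "11 * d"] d \<open>0 < \<rho>\<close> by auto
  define Ys where "Ys = {z\<in>Y. \<forall>k\<in>F. cball (cen k) (rad k) \<inter> E \<inter> cball z d \<noteq> {} \<longrightarrow> rad k \<le> 2 * d}"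
  have lower: "K * measure M (cball y \<rho>) \<le> C\<^sub>D^4 * (\<Sum>z\<in>Y. measure M (cball z d))"
    using measure_cball_le_net_sum[OF assouad c y \<delta> \<open>0 < \<rho>\<close> \<open>ereal \<rho> < ediam E\<close> Y(1)] net
    by (simp add: K d_def)
  have split: "(\<Sum>z\<in>Y. measure M (cball z d))
      = (\<Sum>z\<in>Ys. measure M (cball z d)) + (\<Sum>z\<in>Y - Ys. measure M (cball z d))"
    using sum.subset_diff[of Ys Y] Y(1) unfolding Ys_def by (simp add: add.commute)
  have small: "(\<Sum>z\<in>Ys. measure M (cball z d)) \<le> S * (\<delta> * \<rho>) powr q / C"
    unfolding S_def d_def[symmetric]
  proof (rule sum_measure_le_cover_sum_small_balls[OF IH[folded d_def] d(1) C_pos, where e="11 * d"])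
    show "E \<inter> cball z d \<subseteq> (\<Union>k\<in>F. cball (cen k) (rad k))" if "z \<in> Ys" for z
    proof
      fix p assume "p \<in> E \<inter> cball z d"
      moreover have "dist y z \<le> \<rho> / 2" using that Y(2) by (auto simp: Ys_def)
      ultimately have "p \<in> E \<inter> cball y \<rho>" using dist_triangle[of y p z] d by auto
      then show "p \<in> (\<Union>k\<in>F. cball (cen k) (rad k))" using cov by blast
    qed
  qed (use Y d F rads in \<open>auto simp: Ys_def separated_def\<close>)
  have large: "(\<Sum>z\<in>Y - Ys. measure M (cball z d)) \<le> C\<^sub>D * (2 * \<rho>) powr q * S"
    unfolding S_def
  proof (rule sum_measure_le_cover_sum_large_balls[OF q, where e="11 * d"])
    show "\<exists>k\<in>F. 2 * d < rad k \<and> cball (cen k) (rad k) \<inter> cball z d \<noteq> {}" if "z \<in> Y - Ys" for z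
      using that by (fastforce simp: Ys_def not_le)
  qed (use Y d F rads \<open>0 < rmin\<close> in \<open>auto simp: separated_def\<close>)
  have "0 \<le> S" unfolding S_def cover_sum_def by (intro sum_nonneg) auto
  from covering_bound_step_estimate[OF \<open>0 < \<rho>\<close> this lower[unfolded split] small large]
  show "C * \<rho> powr (-q) * measure M (cball y \<rho>) \<le> S" .
qed

lemma covering_bound_all_scales:
  assumes "0 < rmin"
  shows "0 < \<rho> \<Longrightarrow> ereal \<rho> < ediam E \<Longrightarrow> 2 * \<delta> ^ n * \<rho> < rmin \<Longrightarrow> covering_bound q E C rmin \<rho>"
proof (induction n arbitrary: \<rho>)
  case 0
  show ?case unfolding covering_bound_def
  proof (intro ballI allI impI)
    fix y and F :: "nat set" and cen rad
    assume "y \<in> E" "\<forall>k\<in>F. rmin \<le> rad k \<and> rad k \<le> 2 * \<rho>" "E \<inter> cball y \<rho> \<subseteq> (\<Union>k\<in>F. cball (cen k) (rad k))"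
    with 0 have False by fastforce
    then show "C * \<rho> powr (-q) * measure M (cball y \<rho>) \<le> cover_sum q F cen rad" ..
  qed
next
  case (Suc n)
  have "ereal (\<delta> * \<rho>) < ediam E"
    by (rule order.strict_trans1[OF _ Suc.prems(2)]) (use Suc.prems(1) \<delta> in simp)
  then have "covering_bound q E C rmin (\<delta> * \<rho>)"
    using Suc.IH Suc.prems \<delta> by (simp add: mult_ac)
  then show ?case using covering_bound_step assms Suc.prems(1,2) by blast
qed

lemma cover_sum_lower_bound:
  assumes "w \<in> E" "0 < R" "ereal R < ediam E" "finite F" "\<forall>k\<in>F. 0 < rad k \<and> rad k \<le> 2 * R"
    and cov: "E \<inter> cball w R \<subseteq> (\<Union>k\<in>F. cball (cen k) (rad k))"
  shows "C * R powr (-q) * measure M (cball w R) \<le> cover_sum q F cen rad"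
proof -
  have "F \<noteq> {}" using cov assms(1,2) by fastforce
  define rmin where "rmin = Min (rad ` F)"
  have rmin: "0 < rmin" "\<forall>k\<in>F. rmin \<le> rad k"
    using assms(4,5) \<open>F \<noteq> {}\<close> by (auto simp: rmin_def)
  obtain n where "\<delta> ^ n < rmin / (2 * R)"
    using real_arch_pow_inv[of "rmin / (2 * R)" \<delta>] rmin assms(2) \<delta> by auto
  then have "2 * \<delta> ^ n * R < rmin" using assms(2) by (simp add: field_simps)
  then have "covering_bound q E C rmin R"
    using covering_bound_all_scales[OF rmin(1)] assms(2,3) by blast
  then show ?thesis using assms rmin(2) unfolding covering_bound_def by blast
qed

end

lemma cover_sum_double_radii:
  assumes "\<forall>k\<in>F. 0 < rad k"
  shows "cover_sum q F cen (\<lambda>k. 2 * rad k) \<le> 2 powr (-q) * C\<^sub>D * cover_sum q F cen rad"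
  unfolding cover_sum_def sum_distrib_left
proof (rule sum_mono)
  fix k assume "k \<in> F"
  then have rk: "0 < rad k" using assms by auto
  have "(2 * rad k) powr (-q) * measure M (cball (cen k) (2 * rad k))
      \<le> (2 powr (-q) * rad k powr (-q)) * (C\<^sub>D * measure M (cball (cen k) (rad k)))"
    using measure_cball_double[OF rk] rk by (simp add: powr_mult)
  then show "(2 * rad k) powr (-q) * measure M (cball (cen k) (2 * rad k))
      \<le> 2 powr (-q) * C\<^sub>D * (rad k powr (-q) * measure M (cball (cen k) (rad k)))"
    by (simp add: mult_ac)
qed

lemma ennreal_cover_sum_le_suminf:
  assumes "finite F" "F \<subseteq> I"
  shows "ennreal (cover_sum q F cen rad)
    \<le> (\<Sum>k. if k \<in> I then ennreal (rad k powr (-q)) * emeasure M (cball (cen k) (rad k)) else 0)"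
proof -
  have "ennreal (cover_sum q F cen rad) = (\<Sum>k\<in>F. ennreal (rad k powr (-q) * measure M (cball (cen k) (rad k))))"
    unfolding cover_sum_def by (rule sum_ennreal[symmetric]) simp
  also have "\<dots> = (\<Sum>k\<in>F. if k \<in> I then ennreal (rad k powr (-q)) * emeasure M (cball (cen k) (rad k)) else 0)"
    using assms(2) by (intro sum.cong) (auto simp: emeasure_cball ennreal_mult)
  also have "\<dots> \<le> (\<Sum>k. if k \<in> I then ennreal (rad k powr (-q)) * emeasure M (cball (cen k) (rad k)) else 0)"
    using assms(1) by (intro sum_le_suminf summableI) auto
  finally show ?thesis .
qed

text \<open>Doubling the radii turns a cover by closed balls into an open cover, so by compactness
  finitely many of the doubled balls suffice.\<close>
lemma hcontent_ge_if_finite_covers: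
  assumes "compact A"
    and bound: "\<And>F cen rad. finite F \<Longrightarrow> \<forall>k\<in>F. 0 < rad k \<and> rad k \<le> 2 * R \<Longrightarrow>
      A \<subseteq> (\<Union>k\<in>F. cball (cen k) (rad k)) \<Longrightarrow> a \<le> cover_sum q F cen rad"
  shows "ennreal (2 powr q / C\<^sub>D * a) \<le> hcontent M q R A"
proof -
  have "ennreal (2 powr q / C\<^sub>D * a)
      \<le> (\<Sum>k. if k \<in> I then ennreal (rad k powr (-q)) * emeasure M (cball (cen k) (rad k)) else 0)"
    if cov: "A \<subseteq> (\<Union>k\<in>I. cball (cen k) (rad k))" and rads: "\<forall>k\<in>I. 0 < rad k \<and> rad k \<le> R"
    for I cen rad
  proof -
    have "A \<subseteq> (\<Union>k\<in>I. ball (cen k) (2 * rad k))"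
    proof
      fix p assume "p \<in> A"
      then obtain k where k: "k \<in> I" "dist (cen k) p \<le> rad k" using cov by auto
      then have "dist (cen k) p < 2 * rad k" using rads by force
      with k(1) show "p \<in> (\<Union>k\<in>I. ball (cen k) (2 * rad k))" by auto
    qed
    then obtain F where F: "F \<subseteq> I" "finite F" "A \<subseteq> (\<Union>k\<in>F. ball (cen k) (2 * rad k))"
      using compactE_image[OF assms(1), of I "\<lambda>k. ball (cen k) (2 * rad k)"] by auto
    have "A \<subseteq> (\<Union>k\<in>F. cball (cen k) (2 * rad k))"
      using F(3) ball_subset_cball by blast
    then have "a \<le> cover_sum q F cen (\<lambda>k. 2 * rad k)"
      using rads F(1,2) by (intro bound) auto
    also have "\<dots> \<le> 2 powr (-q) * C\<^sub>D * cover_sum q F cen rad"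
      using rads F(1) by (intro cover_sum_double_radii) auto
    finally have "2 powr q / C\<^sub>D * a \<le> cover_sum q F cen rad"
      using doubling_const_ge_1 by (simp add: powr_minus field_simps)
    from order.trans[OF ennreal_leI[OF this] ennreal_cover_sum_le_suminf[OF F(2,1)]]
    show ?thesis .
  qed
  then show ?thesis unfolding hcontent_def by (intro Inf_greatest) fastforce
qed

end

locale complete_doubling_metric_measure = doubling_metric_measure M for M :: "'a::complete_space measure"
begin

lemma compact_Int_cball:
  fixes E :: "'a set"
  assumes "closed E"
  shows "compact (E \<inter> cball w R)"
proof (cases "0 \<le> R")
  case True
  show ?thesis unfolding compact_eq_totally_bounded
  proof (intro conjI allI impI)
    show "complete (E \<inter> cball w R)" using assms by (simp add: complete_eq_closed closed_Int)
    fix e :: real assume "0 < e"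
    obtain Y where "finite Y" "Y \<subseteq> E \<inter> cball w R" "\<forall>a\<in>E \<inter> cball w R. \<exists>y\<in>Y. dist a y < e"
      by (rule exists_separated_net[OF Int_lower2 \<open>0 < e\<close> True])
    then show "\<exists>k. finite k \<and> E \<inter> cball w R \<subseteq> (\<Union>x\<in>k. ball x e)"
      by (intro exI[of _ Y]) (auto simp: dist_commute)
  qed
qed simp

lemma content_bound_if_assouad_bound:
  assumes "closed E" "assouad_bound E s c" "0 < c" "0 \<le> s" "s < q"
  shows "\<exists>C>0. content_bound E q C"
proof -
  have D: "1 \<le> C\<^sub>D" by (rule doubling_const_ge_1)
  obtain \<delta> where \<delta>: "0 < \<delta>" "\<delta> \<le> 1/8"
    and "C\<^sub>D^4 * \<delta> powr q \<le> c * 4 powr s / (2 * C\<^sub>D^2) * \<delta> powr s"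
    using exists_small_powr_le[of "C\<^sub>D^4" "c * 4 powr s / (2 * C\<^sub>D^2)" s q "1/8"] assms(3,5) D by auto
  moreover define K where "K = c * (4 * \<delta>) powr s / C\<^sub>D^2"
  ultimately have small_\<delta>: "C\<^sub>D^4 * \<delta> powr q \<le> K / 2" by (simp add: powr_mult)
  define C where "C = K / (2 * C\<^sub>D^5 * 2 powr q)"
  have "0 < C" using assms(3) \<delta> D by (simp add: C_def K_def)
  have "content_bound E q (2 powr q / C\<^sub>D * C)"
    unfolding content_bound_def
  proof (intro ballI allI impI)
    fix w R assume w: "w \<in> E" and R: "0 < R \<and> ereal R < ediam E"
    have "ennreal (2 powr q / C\<^sub>D * (C * R powr (-q) * measure M (cball w R)))
        \<le> hcontent M q R (E \<inter> cball w R)"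
      using cover_sum_lower_bound[OF assms(2,3) _ \<delta> K_def small_\<delta> C_def w] assms(4,5) R
      by (intro hcontent_ge_if_finite_covers compact_Int_cball assms(1)) auto
    then show "ennreal (2 powr q / C\<^sub>D * C * R powr (-q) * measure M (cball w R))
        \<le> hcontent M q R (E \<inter> cball w R)" by (simp add: mult_ac)
  qed
  then show ?thesis using \<open>0 < C\<close> D by (intro exI[of _ "2 powr q / C\<^sub>D * C"]) auto
qed

end

theorem corollary5p2:
  fixes M :: "'a::complete_space measure" and E :: "'a set"
  assumes "doubling_mm M"
    and "closed E"
  shows "upper_assouad_codim M E =
    Inf (ereal ` {q::real. 0 \<le> q \<and> (\<exists>C>0. \<forall>w\<in>E. \<forall>R. 0 < R \<and> ereal R < ediam E \<longrightarrow>
        ennreal (C * R powr (-q) * measure M (cball w R)) \<le> hcontent M q R (E \<inter> cball w R))})"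
proof -
  interpret complete_doubling_metric_measure M by unfold_locales (rule assms(1))
  have content: "(\<forall>w\<in>E. \<forall>R. 0 < R \<and> ereal R < ediam E \<longrightarrow>
      ennreal (C * R powr (-q) * measure M (cball w R)) \<le> hcontent M q R (E \<inter> cball w R))
    \<longleftrightarrow> content_bound E q C" for q C
    unfolding content_bound_def ..
  show ?thesis unfolding upper_assouad_codim_eq content
  proof (rule Inf_ereal_eq_if_dense_above)
    have "\<exists>c>0. assouad_bound E q c" if "0 < C" "content_bound E q C" for q C
      using assouad_bound_if_content_bound[OF that(2,1)] that(1) doubling_const_ge_1
      by (intro exI[of _ "C / (C\<^sub>D^3 * 2 powr q)"]) auto
    then show "{q. 0 \<le> q \<and> (\<exists>C>0. content_bound E q C)} \<subseteq> {s. 0 \<le> s \<and> (\<exists>c>0. assouad_bound E s c)}"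
      by blast
    show "q \<in> {q. 0 \<le> q \<and> (\<exists>C>0. content_bound E q C)}"
      if "s \<in> {s. 0 \<le> s \<and> (\<exists>c>0. assouad_bound E s c)}" "s < q" for s q
      using content_bound_if_assouad_bound[OF assms(2)] that by force
  qed
qed

end
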